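(* Let $N,M\ge 0$ be integers, let $A_0,\dots,A_N$ and $B_0,\dots,B_M$ be rational numbers with $B_0\neq 0$, and consider the Diophantine equation $$\sum_{i=0}^N A_i\big(Z_i^5+{Z'_{i+1}}^5\big)=\sum_{i=0}^M B_i\big(W_i^3+{W'_{i+1}}^3\big)\qquad(\ast\ast)$$ in the unknowns $Z_i,Z'_{i+1}$ $(0\le i\le N)$, $W_i,W'_{i+1}$ $(0\le i\le M)$. Fix rational numbers $x_0,\dots,x_N$ and $y_1,\dots,y_M$, and let $C$ be the quartic curve $$v^2=\Big(\frac{\sum_{i=0}^N A_i}{3B_0}\Big)t^4+\Big(\frac{10\sum_{i=0}^N A_ix_i^2-\sum_{i=0}^M B_i}{3B_0}\Big)t^2+\frac{5\sum_{i=0}^N A_ix_i^4-3\sum_{i=1}^M B_iy_i^2}{3B_0}.$$ Then for every rational point $(t,v)$ of $C$, setting $y_0=v$, the tuple $Z_i=t+x_i$, $Z'_{i+1}=t-x_i$ $(0\le i\le N)$, $W_i=t+y_i$, $W'_{i+1}=t-y_i$ $(0\le i\le M)$ is a rational solution of $(\ast\ast)$. Moreover, if $(\ast\ast)$ has a rational solution then, multiplying all $Z$-variables by $\mu^3$ and all $W$-variables by $\mu^5$ for a suitable integer $\mu$, one obtains an integer solution; hence if $C$ has infinitely many rational points (e.g. it has a rational point and is birational to an elliptic curve of positive rank), then $(\ast\ast)$ has infinitely many integer solutions. *)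

theory Defs
  imports Complex_Main
begin

text \<open>The Diophantine equation (**): the unknowns Z_i (0 <= i <= N), Z'_(i+1) (0 <= i <= N),
  W_i (0 <= i <= M), W'_(i+1) (0 <= i <= M) are given as functions on nat; only the
  indicated indices are used.\<close>
definition sol_eq :: "(nat \<Rightarrow> rat) \<Rightarrow> (nat \<Rightarrow> rat) \<Rightarrow> nat \<Rightarrow> nat \<Rightarrow>
    (nat \<Rightarrow> rat) \<Rightarrow> (nat \<Rightarrow> rat) \<Rightarrow> (nat \<Rightarrow> rat) \<Rightarrow> (nat \<Rightarrow> rat) \<Rightarrow> bool" where
  "sol_eq A B N M Z Z' W W' \<longleftrightarrow>
     (\<Sum>i\<le>N. A i * (Z i ^ 5 + Z' (Suc i) ^ 5)) = (\<Sum>i\<le>M. B i * (W i ^ 3 + W' (Suc i) ^ 3))"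

definition curveC :: "(nat \<Rightarrow> rat) \<Rightarrow> (nat \<Rightarrow> rat) \<Rightarrow> nat \<Rightarrow> nat \<Rightarrow>
    (nat \<Rightarrow> rat) \<Rightarrow> (nat \<Rightarrow> rat) \<Rightarrow> (rat \<times> rat) set" where
  "curveC A B N M x y = {(t, v). v ^ 2 =
       ((\<Sum>i\<le>N. A i) / (3 * B 0)) * t ^ 4
     + ((10 * (\<Sum>i\<le>N. A i * x i ^ 2) - (\<Sum>i\<le>M. B i)) / (3 * B 0)) * t ^ 2
     + (5 * (\<Sum>i\<le>N. A i * x i ^ 4) - 3 * (\<Sum>i\<in>{1..M}. B i * y i ^ 2)) / (3 * B 0)}"

text \<open>Integer solutions of (**), with the unused indices normalised to 0
  so that distinct solutions correspond to distinct tuples.\<close>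
definition int_sols :: "(nat \<Rightarrow> rat) \<Rightarrow> (nat \<Rightarrow> rat) \<Rightarrow> nat \<Rightarrow> nat \<Rightarrow>
    ((nat \<Rightarrow> int) \<times> (nat \<Rightarrow> int) \<times> (nat \<Rightarrow> int) \<times> (nat \<Rightarrow> int)) set" where
  "int_sols A B N M = {(Z, Z', W, W').
      (\<forall>i>N. Z i = 0) \<and> Z' 0 = 0 \<and> (\<forall>i>Suc N. Z' i = 0) \<and>
      (\<forall>i>M. W i = 0) \<and> W' 0 = 0 \<and> (\<forall>i>Suc M. W' i = 0) \<and>
      sol_eq A B N M (\<lambda>i. of_int (Z i)) (\<lambda>i. of_int (Z' i)) (\<lambda>i. of_int (W i)) (\<lambda>i. of_int (W' i))}"

end

theory Submission imports Defs begin

text \<open>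
  Substituting \<open>Z = t \<plusminus> x\<^sub>i\<close>, \<open>W = t \<plusminus> y\<^sub>i\<close> kills all even powers of \<open>t\<close>:
  \<open>(t+x)\<^sup>5 + (t-x)\<^sup>5 = 2t\<^sup>5 + 20t\<^sup>3x\<^sup>2 + 10tx\<^sup>4\<close> and \<open>(t+y)\<^sup>3 + (t-y)\<^sup>3 = 2t\<^sup>3 + 6ty\<^sup>2\<close>,
  so after dividing by \<open>2t\<close> the equation becomes exactly the quartic \<open>C\<close> in \<open>(t, y\<^sub>0)\<close>.
  The equation is homogeneous of weight 15 when \<open>Z\<close> has weight 3 and \<open>W\<close> weight 5,
  so clearing a common denominator \<open>\<mu>\<close> of a rational solution gives an integer one.
  Distinct points of \<open>C\<close> give distinct integer solutions, because \<open>t\<close>, \<open>y\<^sub>0\<close> and the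
  scaling factor \<open>\<mu>\<close> can be read off from \<open>Z\<^sub>0 + Z'\<^sub>1 = 2\<mu>\<^sup>3t\<close>, \<open>W\<^sub>0 + W'\<^sub>1 = 2\<mu>\<^sup>5t\<close> and
  \<open>W\<^sub>0 - W'\<^sub>1 = 2\<mu>\<^sup>5y\<^sub>0\<close> (using the curve equation \<open>v\<^sup>2 = const\<close> when \<open>t = 0\<close>).
\<close>

lemma fifth_power_sum_sym:
  "(t + x) ^ 5 + (t - x) ^ 5 = 2 * t ^ 5 + 20 * t ^ 3 * x ^ 2 + 10 * t * (x::'a::comm_ring_1) ^ 4"
  by (simp add: eval_nat_numeral algebra_simps)

lemma cube_sum_sym: "(t + y) ^ 3 + (t - y) ^ 3 = 2 * t ^ 3 + 6 * t * (y::'a::comm_ring_1) ^ 2"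
  by (simp add: eval_nat_numeral algebra_simps)

lemma sum_atMost_fun_upd_0:
  fixes M :: nat
  shows "(\<Sum>i\<le>M. f i ((y(0 := v)) i)) = f 0 v + (\<Sum>i\<in>{1..M}. f i (y i))"
proof -
  have "{..M} = insert 0 {1..M}" by fastforce
  then show ?thesis by simp
qed

lemma sol_eq_of_curveC:
  assumes "B 0 \<noteq> 0" "(t, v) \<in> curveC A B N M x y"
  shows "sol_eq A B N M (\<lambda>i. t + x i) (\<lambda>j. t - x (j - 1))
                        (\<lambda>i. t + (y(0 := v)) i) (\<lambda>j. t - (y(0 := v)) (j - 1))"
proof -
  define SA SA2 SA4 SB SBy where
    "SA = (\<Sum>i\<le>N. A i)" and "SA2 = (\<Sum>i\<le>N. A i * x i ^ 2)" and "SA4 = (\<Sum>i\<le>N. A i * x i ^ 4)"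
    and "SB = (\<Sum>i\<le>M. B i)" and "SBy = (\<Sum>i\<in>{1..M}. B i * y i ^ 2)"
  have "v ^ 2 = SA / (3 * B 0) * t ^ 4 + (10 * SA2 - SB) / (3 * B 0) * t ^ 2 + (5 * SA4 - 3 * SBy) / (3 * B 0)"
    using assms(2) unfolding curveC_def SA_def SA2_def SA4_def SB_def SBy_def by simp
  then have curve: "3 * B 0 * v ^ 2 = SA * t ^ 4 + (10 * SA2 - SB) * t ^ 2 + (5 * SA4 - 3 * SBy)"
    using assms(1) by (simp add: distrib_left)
  have "(\<Sum>i\<le>N. A i * ((t + x i) ^ 5 + (t - x i) ^ 5))
      = (\<Sum>i\<le>N. 2 * t ^ 5 * A i + 20 * t ^ 3 * (A i * x i ^ 2) + 10 * t * (A i * x i ^ 4))"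
    unfolding fifth_power_sum_sym by (simp add: algebra_simps)
  then have lhs: "(\<Sum>i\<le>N. A i * ((t + x i) ^ 5 + (t - x i) ^ 5))
      = 2 * t ^ 5 * SA + 20 * t ^ 3 * SA2 + 10 * t * SA4"
    unfolding SA_def SA2_def SA4_def by (simp add: sum.distrib sum_distrib_left)
  have "(\<Sum>i\<le>M. B i * ((t + (y(0 := v)) i) ^ 3 + (t - (y(0 := v)) i) ^ 3))
      = (\<Sum>i\<le>M. 2 * t ^ 3 * B i + 6 * t * (B i * (y(0 := v)) i ^ 2))"
    unfolding cube_sum_sym by (simp add: algebra_simps)
  also have "\<dots> = 2 * t ^ 3 * SB + 6 * t * (\<Sum>i\<le>M. B i * (y(0 := v)) i ^ 2)"
    unfolding SB_def by (simp add: sum.distrib sum_distrib_left)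
  also have "(\<Sum>i\<le>M. B i * (y(0 := v)) i ^ 2) = B 0 * v ^ 2 + SBy"
    unfolding SBy_def by (rule sum_atMost_fun_upd_0)
  finally have rhs: "(\<Sum>i\<le>M. B i * ((t + (y(0 := v)) i) ^ 3 + (t - (y(0 := v)) i) ^ 3))
      = 2 * t ^ 3 * SB + 6 * t * (B 0 * v ^ 2 + SBy)" .
  have "2 * t ^ 5 * SA + 20 * t ^ 3 * SA2 + 10 * t * SA4 = 2 * t ^ 3 * SB + 6 * t * (B 0 * v ^ 2 + SBy)"
    using arg_cong[OF curve, of "\<lambda>z. 2 * t * z"] by (simp add: algebra_simps power_numeral_reduce)
  then show ?thesis unfolding sol_eq_def using lhs rhs by simp
qed

lemma sol_eq_cong:
  assumes "\<And>i. i \<le> N \<Longrightarrow> Z i = Zp i" "\<And>i. i \<le> N \<Longrightarrow> Z' (Suc i) = Zq (Suc i)"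
    "\<And>i. i \<le> M \<Longrightarrow> W i = Wp i" "\<And>i. i \<le> M \<Longrightarrow> W' (Suc i) = Wq (Suc i)"
  shows "sol_eq A B N M Z Z' W W' = sol_eq A B N M Zp Zq Wp Wq"
  unfolding sol_eq_def using assms by (intro arg_cong2[where f="(=)"] sum.cong) auto

lemma sol_eq_weighted_scale:
  assumes "sol_eq A B N M Z Z' W W'"
  shows "sol_eq A B N M (\<lambda>i. c ^ 3 * Z i) (\<lambda>i. c ^ 3 * Z' i) (\<lambda>i. c ^ 5 * W i) (\<lambda>i. c ^ 5 * W' i)"
proof -
  have "(\<Sum>i\<le>N. A i * ((c ^ 3 * Z i) ^ 5 + (c ^ 3 * Z' (Suc i)) ^ 5))
      = c ^ 15 * (\<Sum>i\<le>N. A i * (Z i ^ 5 + Z' (Suc i) ^ 5))"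
    unfolding sum_distrib_left by (rule sum.cong[OF refl]) algebra
  moreover have "(\<Sum>i\<le>M. B i * ((c ^ 5 * W i) ^ 3 + (c ^ 5 * W' (Suc i)) ^ 3))
      = c ^ 15 * (\<Sum>i\<le>M. B i * (W i ^ 3 + W' (Suc i) ^ 3))"
    unfolding sum_distrib_left by (rule sum.cong[OF refl]) algebra
  ultimately show ?thesis using assms unfolding sol_eq_def by simp
qed

lemma rat_common_denominator:
  "finite S \<Longrightarrow> \<exists>d::int. d > 0 \<and> (\<forall>q\<in>S. of_int d * (q::rat) \<in> \<int>)"
proof (induction S rule: finite_induct)
  case empty
  show ?case by (intro exI[of _ 1]) auto
next
  case (insert q S)
  then obtain d where d: "d > 0" "\<forall>q\<in>S. of_int d * q \<in> \<int>" by auto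
  obtain a b where "quotient_of q = (a, b)" by (cases "quotient_of q")
  then have b: "b > 0" "q = of_int a / of_int b" by (auto simp: quotient_of_denom_pos quotient_of_div)
  have "of_int (d * b) * q' \<in> \<int>" if "q' \<in> S" for q'
  proof -
    have "of_int (d * b) * q' = of_int b * (of_int d * q')" by simp
    then show ?thesis using d that by (metis Ints_mult Ints_of_int)
  qed
  moreover have "of_int (d * b) * q = of_int (d * a)" using b by simp
  ultimately show ?case using d b by (intro exI[of _ "d * b"]) auto
qed

lemma Ints_power_mult:
  assumes "(c::'a::ring_1) * q \<in> \<int>" "c \<in> \<int>" "n > 0"
  shows "c ^ n * q \<in> \<int>"
proof -
  obtain m where "n = Suc m" using \<open>n > 0\<close> gr0_implies_Suc by blast
  then have "c ^ n * q = c ^ m * (c * q)" by (simp only: power_Suc2 mult.assoc)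
  then show ?thesis using Ints_mult[OF Ints_power[OF assms(2)] assms(1)] by simp
qed

definition integral_weighted_scaling ::
    "nat \<Rightarrow> nat \<Rightarrow> (nat \<Rightarrow> rat) \<Rightarrow> (nat \<Rightarrow> rat) \<Rightarrow> (nat \<Rightarrow> rat) \<Rightarrow> (nat \<Rightarrow> rat) \<Rightarrow> rat \<Rightarrow> bool" where
  "integral_weighted_scaling N M Z Z' W W' c \<longleftrightarrow>
     (\<forall>i\<le>N. c ^ 3 * Z i \<in> \<int>) \<and> (\<forall>i\<in>{1..Suc N}. c ^ 3 * Z' i \<in> \<int>) \<and>
     (\<forall>i\<le>M. c ^ 5 * W i \<in> \<int>) \<and> (\<forall>i\<in>{1..Suc M}. c ^ 5 * W' i \<in> \<int>)"

lemma ex_integral_weighted_scaling: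
  "\<exists>\<mu>::int. \<mu> > 0 \<and> integral_weighted_scaling N M Z Z' W W' (of_int \<mu>)"
proof -
  define S where "S = Z ` {..N} \<union> Z' ` {1..Suc N} \<union> W ` {..M} \<union> W' ` {1..Suc M}"
  obtain d :: int where "d > 0" and d: "\<forall>q\<in>S. of_int d * q \<in> \<int>"
    using rat_common_denominator[of S] unfolding S_def by auto
  have "of_int d ^ n * q \<in> \<int>" if "q \<in> S" "n > 0" for q n
    using d that by (intro Ints_power_mult) auto
  then have "integral_weighted_scaling N M Z Z' W W' (of_int d)"
    unfolding integral_weighted_scaling_def S_def by auto
  with \<open>d > 0\<close> show ?thesis by blast
qed

definition int_tuple_on :: "nat set \<Rightarrow> (nat \<Rightarrow> rat) \<Rightarrow> nat \<Rightarrow> int" where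
  "int_tuple_on I f i = (if i \<in> I then \<lfloor>f i\<rfloor> else 0)"

lemma of_int_int_tuple_on: "i \<in> I \<Longrightarrow> f i \<in> \<int> \<Longrightarrow> of_int (int_tuple_on I f i) = f i"
  unfolding int_tuple_on_def by (metis Ints_cases floor_of_int)

lemma int_tuple_on_eqD:
  "int_tuple_on I f = int_tuple_on I g \<Longrightarrow> i \<in> I \<Longrightarrow> f i \<in> \<int> \<Longrightarrow> g i \<in> \<int> \<Longrightarrow> f i = g i"
  by (metis of_int_int_tuple_on)

lemma int_tuple_on_in_int_sols:
  assumes "integral_weighted_scaling N M Z Z' W W' 1" "sol_eq A B N M Z Z' W W'"
  shows "(int_tuple_on {..N} Z, int_tuple_on {1..Suc N} Z', int_tuple_on {..M} W,
          int_tuple_on {1..Suc M} W') \<in> int_sols A B N M"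
proof -
  have "sol_eq A B N M (\<lambda>i. of_int (int_tuple_on {..N} Z i)) (\<lambda>i. of_int (int_tuple_on {1..Suc N} Z' i))
          (\<lambda>i. of_int (int_tuple_on {..M} W i)) (\<lambda>i. of_int (int_tuple_on {1..Suc M} W' i))"
    using assms unfolding integral_weighted_scaling_def
    by (subst sol_eq_cong[where Zp=Z and Zq=Z' and Wp=W and Wq=W']) (simp_all add: of_int_int_tuple_on)
  then show ?thesis unfolding int_sols_def by (auto simp: int_tuple_on_def)
qed

lemma weighted_scaling_inj:
  fixes a b t t' v v' :: "'a::linordered_field"
  assumes "a > 0" "b > 0" "a ^ 3 * t = b ^ 3 * t'" "a ^ 5 * t = b ^ 5 * t'" "a ^ 5 * v = b ^ 5 * v'"
    and "t = 0 \<Longrightarrow> v ^ 2 = v' ^ 2"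
  shows "t = t' \<and> v = v'"
proof (cases "t = 0 \<and> v = 0")
  case True
  then show ?thesis using assms by simp
next
  case False
  have "a ^ 2 = b ^ 2 \<or> a ^ 10 = b ^ 10"
  proof (cases "t = 0")
    case False
    have "a ^ 2 * (a ^ 3 * t) = a ^ 5 * t" by (simp add: eval_nat_numeral)
    also have "\<dots> = b ^ 2 * (b ^ 3 * t')" using assms(4) by (simp add: eval_nat_numeral)
    also have "\<dots> = b ^ 2 * (a ^ 3 * t)" using assms(3) by simp
    finally have "a ^ 2 * (a ^ 3 * t) = b ^ 2 * (a ^ 3 * t)" .
    moreover have "a ^ 3 * t \<noteq> 0" using False \<open>a > 0\<close> by simp
    ultimately show ?thesis by (metis mult_right_cancel)
  next
    case True
    then have "v \<noteq> 0" "v ^ 2 = v' ^ 2" using \<open>\<not> (t = 0 \<and> v = 0)\<close> assms(6) by auto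
    moreover have "(a ^ 5 * v) ^ 2 = (b ^ 5 * v') ^ 2" using assms(5) by simp
    ultimately have "a ^ 10 * v ^ 2 = b ^ 10 * v ^ 2" by (simp add: power_mult_distrib flip: power_mult)
    then show ?thesis using \<open>v \<noteq> 0\<close> by simp
  qed
  then have "a = b" using assms(1,2) by (auto simp: power_eq_iff_eq_base)
  then show ?thesis using assms by simp
qed

lemma infinite_int_sols_of_infinite_curveC:
  assumes "B 0 \<noteq> 0" and inf: "infinite (curveC A B N M x y)"
  shows "infinite (int_sols A B N M)"
proof -
  define C where "C = curveC A B N M x y"
  define Z where "Z = (\<lambda>p::rat \<times> rat. \<lambda>i. fst p + x i)"
  define Z' where "Z' = (\<lambda>p::rat \<times> rat. \<lambda>j. fst p - x (j - 1))"
  define W where "W = (\<lambda>p::rat \<times> rat. \<lambda>i. fst p + (y(0 := snd p)) i)"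
  define W' where "W' = (\<lambda>p::rat \<times> rat. \<lambda>j. fst p - (y(0 := snd p)) (j - 1))"
  have "\<forall>p. \<exists>\<mu>::int. \<mu> > 0 \<and> integral_weighted_scaling N M (Z p) (Z' p) (W p) (W' p) (of_int \<mu>)"
    using ex_integral_weighted_scaling by blast
  then obtain \<mu> :: "rat \<times> rat \<Rightarrow> int"
    where \<mu>: "\<And>p. \<mu> p > 0 \<and> integral_weighted_scaling N M (Z p) (Z' p) (W p) (W' p) (of_int (\<mu> p))"
    by (metis choice)
  define F where "F = (\<lambda>p. (int_tuple_on {..N} (\<lambda>i. of_int (\<mu> p) ^ 3 * Z p i),
      int_tuple_on {1..Suc N} (\<lambda>i. of_int (\<mu> p) ^ 3 * Z' p i),
      int_tuple_on {..M} (\<lambda>i. of_int (\<mu> p) ^ 5 * W p i),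
      int_tuple_on {1..Suc M} (\<lambda>i. of_int (\<mu> p) ^ 5 * W' p i)))"
  have "F p \<in> int_sols A B N M" if "p \<in> C" for p
  proof -
    have "sol_eq A B N M (Z p) (Z' p) (W p) (W' p)"
      using sol_eq_of_curveC[where B=B, OF assms(1)] that
      unfolding C_def Z_def Z'_def W_def W'_def by (cases p) simp
    then show ?thesis
      using \<mu>[of p] unfolding F_def
      by (intro int_tuple_on_in_int_sols sol_eq_weighted_scale) (simp_all add: integral_weighted_scaling_def)
  qed
  then have "F ` C \<subseteq> int_sols A B N M" by blast
  moreover have "inj_on F C"
  proof
    fix p q assume "p \<in> C" "q \<in> C" and Fpq: "F p = F q"
    obtain t v t' v' where pq: "p = (t, v)" "q = (t', v')" by fastforce
    define a b where "a = (of_int (\<mu> p) :: rat)" and "b = (of_int (\<mu> q) :: rat)"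
    note \<mu>p = \<mu>[of p, folded a_def, unfolded integral_weighted_scaling_def]
      and \<mu>q = \<mu>[of q, folded b_def, unfolded integral_weighted_scaling_def]
    have "a ^ 3 * Z p 0 = b ^ 3 * Z q 0"
      using Fpq \<mu>p \<mu>q by (intro int_tuple_on_eqD[of "{..N}"]) (auto simp: F_def a_def b_def)
    moreover have "a ^ 3 * Z' p 1 = b ^ 3 * Z' q 1"
      using Fpq \<mu>p \<mu>q by (intro int_tuple_on_eqD[of "{1..Suc N}"]) (auto simp: F_def a_def b_def)
    moreover have "a ^ 5 * W p 0 = b ^ 5 * W q 0"
      using Fpq \<mu>p \<mu>q by (intro int_tuple_on_eqD[of "{..M}"]) (auto simp: F_def a_def b_def)
    moreover have "a ^ 5 * W' p 1 = b ^ 5 * W' q 1"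
      using Fpq \<mu>p \<mu>q by (intro int_tuple_on_eqD[of "{1..Suc M}"]) (auto simp: F_def a_def b_def)
    ultimately have "a ^ 3 * (t + x 0) = b ^ 3 * (t' + x 0)" "a ^ 3 * (t - x 0) = b ^ 3 * (t' - x 0)"
      "a ^ 5 * (t + v) = b ^ 5 * (t' + v')" "a ^ 5 * (t - v) = b ^ 5 * (t' - v')"
      by (simp_all add: pq Z_def Z'_def W_def W'_def)
    then have scaled: "a ^ 3 * t = b ^ 3 * t'" "a ^ 5 * t = b ^ 5 * t'" "a ^ 5 * v = b ^ 5 * v'"
      by (simp_all add: algebra_simps)
    have ab: "a > 0" "b > 0" using \<mu>p \<mu>q by (simp_all add: a_def b_def)
    have "v ^ 2 = v' ^ 2" if "t = 0"
    proof -
      have "t' = 0" using scaled(1) ab that by simp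
      then show ?thesis using \<open>p \<in> C\<close> \<open>q \<in> C\<close> that by (simp add: C_def curveC_def pq)
    qed
    then show "p = q" using weighted_scaling_inj[OF ab scaled] pq by simp
  qed
  ultimately show ?thesis using inf inj_on_finite unfolding C_def by blast
qed

theorem mainTheorem2:
  fixes N M :: nat and A B x y :: "nat \<Rightarrow> rat"
  assumes "B 0 \<noteq> 0"
  shows "(\<forall>t v. (t, v) \<in> curveC A B N M x y \<longrightarrow>
            sol_eq A B N M (\<lambda>i. t + x i) (\<lambda>j. t - x (j - 1))
                           (\<lambda>i. t + (y(0 := v)) i) (\<lambda>j. t - (y(0 := v)) (j - 1)))
       \<and> (\<forall>Z Z' W W'. sol_eq A B N M Z Z' W W' \<longrightarrow>
            (\<exists>\<mu>::int. \<mu> \<noteq> 0 \<and>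
               (\<forall>i\<le>N. of_int \<mu> ^ 3 * Z i \<in> \<int>) \<and> (\<forall>i\<in>{1..Suc N}. of_int \<mu> ^ 3 * Z' i \<in> \<int>) \<and>
               (\<forall>i\<le>M. of_int \<mu> ^ 5 * W i \<in> \<int>) \<and> (\<forall>i\<in>{1..Suc M}. of_int \<mu> ^ 5 * W' i \<in> \<int>) \<and>
               sol_eq A B N M (\<lambda>i. of_int \<mu> ^ 3 * Z i) (\<lambda>i. of_int \<mu> ^ 3 * Z' i)
                              (\<lambda>i. of_int \<mu> ^ 5 * W i) (\<lambda>i. of_int \<mu> ^ 5 * W' i)))
       \<and> (infinite (curveC A B N M x y) \<longrightarrow> infinite (int_sols A B N M))"
proof -
  have "\<exists>\<mu>::int. \<mu> \<noteq> 0 \<and> integral_weighted_scaling N M Z Z' W W' (of_int \<mu>) \<and>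
      sol_eq A B N M (\<lambda>i. of_int \<mu> ^ 3 * Z i) (\<lambda>i. of_int \<mu> ^ 3 * Z' i)
                     (\<lambda>i. of_int \<mu> ^ 5 * W i) (\<lambda>i. of_int \<mu> ^ 5 * W' i)"
    if "sol_eq A B N M Z Z' W W'" for Z Z' W W'
    using ex_integral_weighted_scaling sol_eq_weighted_scale[OF that] by (metis less_irrefl)
  then show ?thesis
    using sol_eq_of_curveC[where B=B, OF assms] infinite_int_sols_of_infinite_curveC[where B=B, OF assms]
    unfolding integral_weighted_scaling_def conj_assoc by blast
qed

end
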